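(* Let $(V,\mathcal{F})$ be a set system which is the split graph vertex shelling antimatroid of some split graph with vertex set $V$, and suppose $\mathcal{F}\neq 2^V$. Then there is a unique graph $G=(V,E)$ which is a split graph and whose split graph vertex shelling antimatroid is $(V,\mathcal{F})$.
   Context: A split graph is a finite simple graph whose vertex set can be partitioned into a clique $K$ and an independent set $I$. A vertex is simplicial if its neighbours induce a clique. The split graph vertex shelling antimatroid of a split graph $G$ on $V$ is $(V,\mathcal{F})$ where $F\subseteq V$ is feasible iff there is an ordering $f_1,\dots,f_{|F|}$ of $F$ such that each $f_j$ is simplicial in $G$ minus $\{f_1,\dots,f_{j-1}\}$ (the empty set is feasible); this family does not depend on the choice of the partition. $2^V$ denotes the family of all subsets of $V$. *)

theory Defs
  imports Main
begin

definition simple_graph :: "'a set \<Rightarrow> 'a set set \<Rightarrow> bool" where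
  "simple_graph V E \<longleftrightarrow> finite V \<and>
     (\<forall>e\<in>E. \<exists>x y. x \<in> V \<and> y \<in> V \<and> x \<noteq> y \<and> e = {x, y})"

definition adj :: "'a set set \<Rightarrow> 'a \<Rightarrow> 'a \<Rightarrow> bool" where
  "adj E x y \<longleftrightarrow> {x, y} \<in> E"

definition is_clique :: "'a set set \<Rightarrow> 'a set \<Rightarrow> bool" where
  "is_clique E K \<longleftrightarrow> (\<forall>x\<in>K. \<forall>y\<in>K. x \<noteq> y \<longrightarrow> adj E x y)"

definition is_indep :: "'a set set \<Rightarrow> 'a set \<Rightarrow> bool" where
  "is_indep E I \<longleftrightarrow> (\<forall>x\<in>I. \<forall>y\<in>I. \<not> adj E x y)"

definition split_graph :: "'a set \<Rightarrow> 'a set set \<Rightarrow> bool" where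
  "split_graph V E \<longleftrightarrow> simple_graph V E \<and>
     (\<exists>K I. K \<union> I = V \<and> K \<inter> I = {} \<and> is_clique E K \<and> is_indep E I)"

definition simplicial_in :: "'a set \<Rightarrow> 'a set set \<Rightarrow> 'a \<Rightarrow> bool" where
  "simplicial_in W E v \<longleftrightarrow> v \<in> W \<and> is_clique E {u \<in> W. adj E v u}"

definition shelling_feasible :: "'a set \<Rightarrow> 'a set set \<Rightarrow> 'a set \<Rightarrow> bool" where
  "shelling_feasible V E F \<longleftrightarrow> (\<exists>xs. distinct xs \<and> set xs = F \<and>
     (\<forall>j < length xs. simplicial_in (V - set (take j xs)) E (xs ! j)))"

definition vertex_shelling :: "'a set \<Rightarrow> 'a set set \<Rightarrow> 'a set set" where
  "vertex_shelling V E = {F. shelling_feasible V E F}"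

end

theory Submission imports Defs begin

text \<open>A shelling can only delete a vertex whose surviving neighbours are pairwise adjacent, so
  \<open>V - {u, v}\<close> is never feasible when \<open>u\<close> and \<open>v\<close> are nonadjacent ends of an induced path with
  three or four vertices; in a split graph every edge meets the clique part, and two nonadjacent
  non-isolated vertices are always joined by such a path, while \<open>V - {u, v}\<close> is feasible for
  every edge \<open>uv\<close>. Non-isolation itself is visible in the antimatroid: an isolated vertex is
  simplicial and survives to the end together with any partner, whereas a non-isolated vertex
  with these two properties has a closed neighbourhood that is a clique containing every edge,
  which makes every set feasible. Hence, unless \<open>\<F> = Pow V\<close>, the edges are exactly the
  pairs of non-isolated vertices whose complement is feasible.\<close>

lemma adj_commute: "adj E x y \<longleftrightarrow> adj E y x"
  unfolding adj_def by (simp add: insert_commute)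

lemma simple_graph_not_adj_self: "simple_graph V E \<Longrightarrow> \<not> adj E x x"
  unfolding simple_graph_def adj_def by fastforce

lemma simple_graph_adj_in_V:
  assumes "simple_graph V E" "adj E x y"
  shows "x \<in> V" "y \<in> V"
proof -
  obtain a b where "a \<in> V" "b \<in> V" "{x, y} = {a, b}"
    using assms unfolding simple_graph_def adj_def by blast
  then show "x \<in> V" "y \<in> V" by (auto simp: doubleton_eq_iff)
qed

lemma simple_graph_subsetI:
  assumes "simple_graph V E1"
    and "\<And>u v. u \<in> V \<Longrightarrow> v \<in> V \<Longrightarrow> u \<noteq> v \<Longrightarrow> adj E1 u v \<Longrightarrow> adj E2 u v"
  shows "E1 \<subseteq> E2"
proof
  fix e assume "e \<in> E1"
  then obtain u v where "u \<in> V" "v \<in> V" "u \<noteq> v" "e = {u, v}"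
    using assms(1) unfolding simple_graph_def by blast
  with \<open>e \<in> E1\<close> show "e \<in> E2" using assms(2) unfolding adj_def by blast
qed

lemma in_vertex_shelling_iff:
  "F \<in> vertex_shelling V E \<longleftrightarrow> (\<exists>xs. distinct xs \<and> set xs = F \<and>
     (\<forall>j < length xs. simplicial_in (V - set (take j xs)) E (xs ! j)))"
  unfolding vertex_shelling_def shelling_feasible_def by simp

lemma vertex_shelling_subset:
  assumes "F \<in> vertex_shelling V E"
  shows "F \<subseteq> V"
proof
  fix x assume "x \<in> F"
  obtain xs where "set xs = F" "\<forall>j < length xs. simplicial_in (V - set (take j xs)) E (xs ! j)"
    using assms unfolding in_vertex_shelling_iff by blast
  with \<open>x \<in> F\<close> obtain j where "j < length xs" "simplicial_in (V - set (take j xs)) E x"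
    by (metis in_set_conv_nth)
  then show "x \<in> V" unfolding simplicial_in_def by blast
qed

lemma empty_in_vertex_shelling: "{} \<in> vertex_shelling V E"
  unfolding in_vertex_shelling_iff by auto

lemma insert_in_vertex_shelling:
  assumes s: "simplicial_in V E s" and F: "F \<in> vertex_shelling (V - {s}) E"
  shows "insert s F \<in> vertex_shelling V E"
proof -
  obtain xs where xs: "distinct xs" "set xs = F"
    "\<forall>j < length xs. simplicial_in (V - {s} - set (take j xs)) E (xs ! j)"
    using F unfolding in_vertex_shelling_iff by blast
  have "s \<notin> F" using vertex_shelling_subset[OF F] by blast
  have "\<forall>j < length (s # xs). simplicial_in (V - set (take j (s # xs))) E ((s # xs) ! j)"
  proof (intro allI impI)
    fix j assume j: "j < length (s # xs)"
    show "simplicial_in (V - set (take j (s # xs))) E ((s # xs) ! j)"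
    proof (cases j)
      case (Suc k)
      then have "V - set (take j (s # xs)) = V - {s} - set (take k xs)" by auto
      then show ?thesis using xs(3) j Suc by simp
    qed (use s in simp)
  qed
  moreover have "distinct (s # xs)" "set (s # xs) = insert s F" using xs \<open>s \<notin> F\<close> by auto
  ultimately show ?thesis unfolding in_vertex_shelling_iff by (intro exI[of _ "s # xs"] conjI)
qed

lemma singleton_in_vertex_shelling_iff: "{v} \<in> vertex_shelling V E \<longleftrightarrow> simplicial_in V E v"
proof
  assume "{v} \<in> vertex_shelling V E"
  then obtain xs where xs: "distinct xs" "set xs = {v}"
    "\<forall>j < length xs. simplicial_in (V - set (take j xs)) E (xs ! j)"
    unfolding in_vertex_shelling_iff by blast
  then have "length xs = 1" using distinct_card[of xs] by simp
  then have "xs = [v]" using xs(2) by (cases xs) auto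
  then show "simplicial_in V E v" using xs(3) by auto
next
  assume "simplicial_in V E v"
  from insert_in_vertex_shelling[OF this empty_in_vertex_shelling]
  show "{v} \<in> vertex_shelling V E" by simp
qed

lemma simplicial_in_adj:
  "simplicial_in W E s \<Longrightarrow> x \<in> W \<Longrightarrow> y \<in> W \<Longrightarrow> adj E s x \<Longrightarrow> adj E s y \<Longrightarrow> x \<noteq> y
    \<Longrightarrow> adj E x y"
  unfolding simplicial_in_def is_clique_def by blast

lemma simplicial_in_subset:
  "simplicial_in W E s \<Longrightarrow> W' \<subseteq> W \<Longrightarrow> s \<in> W' \<Longrightarrow> simplicial_in W' E s"
  unfolding simplicial_in_def is_clique_def by blast

lemma complement_in_vertex_shellingI:
  assumes "finite V" "T \<subseteq> V"
    and "\<And>W. T \<subset> W \<Longrightarrow> W \<subseteq> V \<Longrightarrow> \<exists>s \<in> W - T. simplicial_in W E s"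
  shows "V - T \<in> vertex_shelling V E"
  using assms
proof (induction "card (V - T)" arbitrary: V)
  case 0
  then have "V - T = {}" by simp
  then show ?case by (metis empty_in_vertex_shelling)
next
  case (Suc n)
  then have "V - T \<noteq> {}" by (metis card.empty nat.distinct(1))
  with Suc.prems(2) have "T \<subset> V" by blast
  then obtain s where s: "s \<in> V - T" "simplicial_in V E s"
    using Suc.prems(3) by blast
  have "V - {s} - T \<in> vertex_shelling (V - {s}) E"
  proof (rule Suc.hyps(1))
    show "n = card (V - {s} - T)" using Suc.hyps(2) Suc.prems(1) s(1)
      by (simp add: Diff_insert2[symmetric] card_Diff_singleton)
    show "finite (V - {s})" using Suc.prems(1) by simp
    show "T \<subseteq> V - {s}" using Suc.prems(2) s(1) by blast
    fix W assume "T \<subset> W" "W \<subseteq> V - {s}"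
    then show "\<exists>s \<in> W - T. simplicial_in W E s" using Suc.prems(3) by blast
  qed
  moreover have "V - T = insert s (V - {s} - T)" using s by blast
  ultimately show ?case using insert_in_vertex_shelling[OF s(2)] by simp
qed

lemma complement_in_vertex_shelling_first_simplicial:
  assumes VT: "V - T \<in> vertex_shelling V E" and "T \<subseteq> V" "S \<subseteq> V - T" "S \<noteq> {}"
  shows "\<exists>s \<in> S. simplicial_in (S \<union> T) E s"
proof -
  obtain xs where xs: "set xs = V - T"
    "\<forall>j < length xs. simplicial_in (V - set (take j xs)) E (xs ! j)"
    using VT unfolding in_vertex_shelling_iff by blast
  obtain x where "x \<in> S" using assms(4) by blast
  then have "x \<in> set xs" using assms(3) xs(1) by blast
  then have "\<exists>j. j < length xs \<and> xs ! j \<in> S"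
    using \<open>x \<in> S\<close> unfolding in_set_conv_nth by blast
  then obtain j where j: "j < length xs" "xs ! j \<in> S"
    and before: "\<And>i. i < j \<Longrightarrow> \<not> (i < length xs \<and> xs ! i \<in> S)"
    using exists_least_iff[of "\<lambda>j. j < length xs \<and> xs ! j \<in> S"] by blast
  \<comment> \<open>the first vertex of S to be shelled still sees all of S and T\<close>
  have "y \<notin> S" if y: "y \<in> set (take j xs)" for y
  proof -
    obtain i where "i < length (take j xs)" "take j xs ! i = y"
      using y unfolding in_set_conv_nth by blast
    then show ?thesis using before[of i] by simp
  qed
  moreover have "set (take j xs) \<inter> T = {}"
    using set_take_subset[of j xs] xs(1) by blast
  ultimately have unshelled: "S \<union> T \<subseteq> V - set (take j xs)" using assms(2,3) by blast
  have "simplicial_in (V - set (take j xs)) E (xs ! j)" using xs(2) j(1) by blast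
  from simplicial_in_subset[OF this unshelled] j(2) show ?thesis by blast
qed

text \<open>If the ends of an induced path survive, the first inner vertex to be shelled has both of its
  path neighbours still present, so they would have to be adjacent.\<close>

lemma complement_notin_vertex_shelling_P3:
  assumes G: "simple_graph V E" and "u \<noteq> v" "adj E u k" "adj E k v" "\<not> adj E u v"
  shows "V - {u, v} \<notin> vertex_shelling V E"
proof
  assume "V - {u, v} \<in> vertex_shelling V E"
  moreover have "u \<in> V" "v \<in> V" "k \<in> V"
    using simple_graph_adj_in_V[OF G assms(3)] simple_graph_adj_in_V[OF G assms(4)] by auto
  moreover have "k \<noteq> u" "k \<noteq> v"
    using assms(3,4) simple_graph_not_adj_self[OF G] by metis+
  ultimately have "simplicial_in {u, v, k} E k"
    using complement_in_vertex_shelling_first_simplicial[of V "{u, v}" E "{k}"] by auto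
  moreover have "adj E k u" using assms(3) adj_commute by metis
  ultimately have "adj E u v"
    using simplicial_in_adj[of "{u, v, k}" E k u v] assms(2,4) by simp
  with assms(5) show False ..
qed

lemma complement_notin_vertex_shelling_P4:
  assumes G: "simple_graph V E" and "u \<noteq> v" "adj E u k1" "adj E k1 k2" "adj E k2 v"
    and "\<not> adj E u k2" "\<not> adj E k1 v" "\<not> adj E u v"
  shows "V - {u, v} \<notin> vertex_shelling V E"
proof
  assume "V - {u, v} \<in> vertex_shelling V E"
  moreover have "u \<in> V" "v \<in> V" "k1 \<in> V" "k2 \<in> V"
    using simple_graph_adj_in_V[OF G assms(3)] simple_graph_adj_in_V[OF G assms(5)] by auto
  moreover have "k1 \<noteq> u" "k1 \<noteq> v" "k2 \<noteq> u" "k2 \<noteq> v" "k1 \<noteq> k2"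
    using assms(3-8) simple_graph_not_adj_self[OF G] by metis+
  ultimately obtain s where "s = k1 \<or> s = k2" "simplicial_in {u, v, k1, k2} E s"
    using complement_in_vertex_shelling_first_simplicial[of V "{u, v}" E "{k1, k2}"] by auto
  moreover have "adj E k1 u" "adj E k2 k1" using assms(3,4) adj_commute by metis+
  ultimately have "adj E u k2 \<or> adj E k1 v"
    using simplicial_in_adj[of "{u, v, k1, k2}" E k1 u k2] simplicial_in_adj[of "{u, v, k1, k2}" E k2 k1 v]
      assms(4,5) \<open>k2 \<noteq> u\<close> \<open>k1 \<noteq> v\<close> by auto
  with assms(6,7) show False by blast
qed

lemma vertex_shelling_eq_Pow_if_adj_trans:
  assumes "finite V" and trans: "\<And>a b c. adj E a b \<Longrightarrow> adj E b c \<Longrightarrow> a \<noteq> c \<Longrightarrow> adj E a c"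
  shows "vertex_shelling V E = Pow V"
proof
  show "vertex_shelling V E \<subseteq> Pow V" using vertex_shelling_subset by blast
  show "Pow V \<subseteq> vertex_shelling V E"
  proof
    fix F assume "F \<in> Pow V"
    have "simplicial_in W E s" if "s \<in> W" for W s
      unfolding simplicial_in_def is_clique_def
      using that trans by (metis (no_types, lifting) adj_commute mem_Collect_eq)
    then have "V - (V - F) \<in> vertex_shelling V E"
      by (intro complement_in_vertex_shellingI[OF assms(1)]) auto
    with \<open>F \<in> Pow V\<close> show "F \<in> vertex_shelling V E" by (simp add: double_diff)
  qed
qed

lemma split_graph_simple: "split_graph V E \<Longrightarrow> simple_graph V E"
  unfolding split_graph_def by blast

lemma split_graphE:
  assumes "split_graph V E"
  obtains K I where "V = K \<union> I" "K \<inter> I = {}"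
    "\<And>x y. x \<in> K \<Longrightarrow> y \<in> K \<Longrightarrow> x \<noteq> y \<Longrightarrow> adj E x y"
    "\<And>x y. x \<in> I \<Longrightarrow> adj E x y \<Longrightarrow> y \<in> K"
proof -
  obtain K I where KI: "K \<union> I = V" "K \<inter> I = {}" "is_clique E K" "is_indep E I"
    using assms unfolding split_graph_def by blast
  note G = split_graph_simple[OF assms]
  have "y \<in> K" if "x \<in> I" "adj E x y" for x y
    using that KI simple_graph_adj_in_V[OF G] unfolding is_indep_def by blast
  with KI show thesis by (intro that[of K I]) (auto simp: is_clique_def)
qed

lemma split_graph_complement_in_vertex_shelling:
  assumes G: "split_graph V E" and "T \<subseteq> V" and T: "is_clique E {t \<in> T. \<exists>y. adj E t y}"
  shows "V - T \<in> vertex_shelling V E"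
proof (rule complement_in_vertex_shellingI)
  obtain K I where KI: "V = K \<union> I" "K \<inter> I = {}"
    and K: "\<And>x y. x \<in> K \<Longrightarrow> y \<in> K \<Longrightarrow> x \<noteq> y \<Longrightarrow> adj E x y"
    and I: "\<And>x y. x \<in> I \<Longrightarrow> adj E x y \<Longrightarrow> y \<in> K"
    by (rule split_graphE[OF G]) blast
  have T_adj: "adj E x z" if "x \<in> T" "z \<in> T" "adj E x a" "adj E z b" "x \<noteq> z" for x z a b
    using T that unfolding is_clique_def by blast
  fix W assume W: "T \<subset> W" "W \<subseteq> V"
  show "\<exists>s \<in> W - T. simplicial_in W E s"
  proof (cases "\<exists>w \<in> W - T. {x \<in> W. adj E w x} \<subseteq> K")
    case True
    then show ?thesis unfolding simplicial_in_def is_clique_def using K by blast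
  next
    case False
    have WT_K: "W - T \<subseteq> K"
    proof
      fix w assume w: "w \<in> W - T"
      show "w \<in> K"
      proof (rule ccontr)
        assume "w \<notin> K"
        then have "{x \<in> W. adj E w x} \<subseteq> K" using I w W(2) KI(1) by blast
        with w False show False by blast
      qed
    qed
    then have I_neighbour: "\<exists>y \<in> T \<inter> I. adj E w y" if "w \<in> W - T" for w
      using that False KI(1) W(2) by blast
    obtain w where w: "w \<in> W - T" using W(1) by blast
    have adj_outside_K: "adj E x z"
      if x: "x \<in> W" and z: "z \<in> W" and wx: "adj E w x" and wz: "adj E w z"
        and "x \<noteq> z" "z \<notin> K" for x z
    proof -
      have zTI: "z \<in> T \<inter> I" using z \<open>z \<notin> K\<close> WT_K KI(1) W(2) by blast
      have zw: "adj E z w" using wz adj_commute by metis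
      show ?thesis
      proof (cases "x \<in> T")
        case True
        have "adj E x w" using wx adj_commute by metis
        then show ?thesis using T_adj[of x z w w] True zTI zw \<open>x \<noteq> z\<close> by blast
      next
        case False
        then obtain y where y: "y \<in> T \<inter> I" "adj E x y" using I_neighbour x by blast
        \<comment> \<open>two distinct non-isolated vertices of T would be adjacent, impossible inside I\<close>
        have "y = z"
        proof (rule ccontr)
          assume "y \<noteq> z"
          have "adj E y x" using y(2) adj_commute by metis
          then have "adj E y z" using T_adj[of y z x w] y(1) zTI zw \<open>y \<noteq> z\<close> by blast
          with y(1) I \<open>z \<notin> K\<close> show False by blast
        qed
        with y show ?thesis by simp
      qed
    qed
    have "simplicial_in W E w"
      unfolding simplicial_in_def is_clique_def
    proof (intro conjI ballI impI)
      fix x z assume "x \<in> {u \<in> W. adj E w u}" "z \<in> {u \<in> W. adj E w u}" "x \<noteq> z"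
      then show "adj E x z"
        using K adj_outside_K[of x z] adj_outside_K[of z x] adj_commute[of E z x] by blast
    qed (use w in blast)
    with w show ?thesis by blast
  qed
qed (use assms(2) split_graph_simple[OF G] in \<open>auto simp: simple_graph_def\<close>)

lemma split_graph_short_induced_path:
  assumes G: "split_graph V E" and "u \<noteq> v" "\<not> adj E u v" "adj E u u'" "adj E v v'"
  shows "(\<exists>k. adj E u k \<and> adj E k v)
    \<or> (\<exists>k1 k2. adj E u k1 \<and> adj E k1 k2 \<and> adj E k2 v \<and> \<not> adj E u k2 \<and> \<not> adj E k1 v)"
proof -
  obtain K I where KI: "V = K \<union> I" "K \<inter> I = {}"
    and K: "\<And>x y. x \<in> K \<Longrightarrow> y \<in> K \<Longrightarrow> x \<noteq> y \<Longrightarrow> adj E x y"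
    and I: "\<And>x y. x \<in> I \<Longrightarrow> adj E x y \<Longrightarrow> y \<in> K"
    by (rule split_graphE[OF G]) blast
  have uV: "u \<in> V" and vV: "v \<in> V"
    using simple_graph_adj_in_V[OF split_graph_simple[OF G]] assms(4,5) by blast+
  have path: "(\<exists>k. adj E a k \<and> adj E k b)
    \<or> (\<exists>k1 k2. adj E a k1 \<and> adj E k1 k2 \<and> adj E k2 b \<and> \<not> adj E a k2 \<and> \<not> adj E k1 b)"
    if b: "b \<in> I" and a: "a \<in> V" and "\<not> adj E a b" "adj E a a'" "adj E b b'" for a b a' b'
  proof -
    have b'b: "adj E b' b" using \<open>adj E b b'\<close> adj_commute by metis
    show ?thesis
    proof (cases "adj E a b'")
      case True
      with b'b show ?thesis by blast
    next
      case False
      have b'K: "b' \<in> K" using I b \<open>adj E b b'\<close> by blast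
      have "a \<noteq> b'" using b'b \<open>\<not> adj E a b\<close> by blast
      then have "a \<in> I" using K b'K False a KI(1) by blast
      then have a'K: "a' \<in> K" using I \<open>adj E a a'\<close> by blast
      have "a' \<noteq> b'" using False \<open>adj E a a'\<close> by blast
      then have "adj E a' b'" using K a'K b'K by blast
      then show ?thesis using False b'b \<open>adj E a a'\<close> \<open>\<not> adj E a b\<close> by blast
    qed
  qed
  have "u \<in> I \<or> v \<in> I" using K KI(1) uV vV assms(2,3) by blast
  then show ?thesis
  proof
    assume "u \<in> I"
    moreover have "\<not> adj E v u" using assms(3) adj_commute by metis
    ultimately have "(\<exists>k. adj E v k \<and> adj E k u)
      \<or> (\<exists>k1 k2. adj E v k1 \<and> adj E k1 k2 \<and> adj E k2 u \<and> \<not> adj E v k2 \<and> \<not> adj E k1 u)"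
      using path vV assms(4,5) by blast
    then show ?thesis by (meson adj_commute)
  qed (use path uV assms(3-5) in blast)
qed

definition shelling_nonisolated :: "'a set set \<Rightarrow> 'a set \<Rightarrow> 'a \<Rightarrow> bool" where
  "shelling_nonisolated \<F> V v \<longleftrightarrow> {v} \<notin> \<F> \<or> (\<exists>x \<in> V. V - {v, x} \<notin> \<F>)"

lemma split_graph_isolated_not_shelling_nonisolated:
  assumes G: "split_graph V E" and "v \<in> V" and isolated: "\<And>y. \<not> adj E v y"
  shows "\<not> shelling_nonisolated (vertex_shelling V E) V v"
proof -
  have "simplicial_in V E v"
    using assms(2) isolated unfolding simplicial_in_def is_clique_def by blast
  then have "{v} \<in> vertex_shelling V E" by (simp add: singleton_in_vertex_shelling_iff)
  moreover have "V - {v, x} \<in> vertex_shelling V E" if "x \<in> V" for x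
  proof (rule split_graph_complement_in_vertex_shelling[OF G])
    show "{v, x} \<subseteq> V" using that assms(2) by blast
    have "{t \<in> {v, x}. \<exists>y. adj E t y} \<subseteq> {x}" using isolated by blast
    then show "is_clique E {t \<in> {v, x}. \<exists>y. adj E t y}" unfolding is_clique_def by blast
  qed
  ultimately show ?thesis unfolding shelling_nonisolated_def by blast
qed

lemma split_graph_shelling_nonisolatedI:
  assumes G: "split_graph V E" and nontrivial: "vertex_shelling V E \<noteq> Pow V" and "adj E v y"
  shows "shelling_nonisolated (vertex_shelling V E) V v"
proof (rule ccontr)
  note Gs = split_graph_simple[OF G]
  assume "\<not> shelling_nonisolated (vertex_shelling V E) V v"
  then have "{v} \<in> vertex_shelling V E" and pairs: "\<And>x. x \<in> V \<Longrightarrow> V - {v, x} \<in> vertex_shelling V E"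
    unfolding shelling_nonisolated_def by auto
  then have v: "simplicial_in V E v" by (simp add: singleton_in_vertex_shelling_iff)
  \<comment> \<open>the closed neighbourhood of v is a clique that no edge leaves, and it contains all edges\<close>
  define C where "C = insert v {x. adj E v x}"
  have closed: "x \<in> C" if k: "k \<in> C" and kx: "adj E k x" for k x
  proof (cases "k = v")
    case False
    then have vk: "adj E v k" using k by (simp add: C_def)
    show ?thesis
    proof (rule ccontr)
      assume "x \<notin> C"
      then have "v \<noteq> x" "\<not> adj E v x" by (auto simp: C_def)
      moreover have "x \<in> V" using simple_graph_adj_in_V[OF Gs kx] by simp
      ultimately show False
        using complement_notin_vertex_shelling_P3[OF Gs _ vk kx] pairs by blast
    qed
  qed (use kx in \<open>simp add: C_def\<close>)
  have clique: "adj E x z" if xz: "x \<in> C" "z \<in> C" "x \<noteq> z" for x z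
  proof -
    consider "x = v" | "z = v" | "adj E v x" "adj E v z" using xz(1,2) by (auto simp: C_def)
    then show ?thesis
    proof cases
      case 3
      moreover have "x \<in> V" "z \<in> V" using calculation simple_graph_adj_in_V[OF Gs] by blast+
      ultimately show ?thesis using simplicial_in_adj[OF v] \<open>x \<noteq> z\<close> by blast
    qed (use xz in \<open>auto simp: C_def adj_commute\<close>)
  qed
  obtain K I where KI: "V = K \<union> I"
    and K: "\<And>x y. x \<in> K \<Longrightarrow> y \<in> K \<Longrightarrow> x \<noteq> y \<Longrightarrow> adj E x y"
    and I: "\<And>x y. x \<in> I \<Longrightarrow> adj E x y \<Longrightarrow> y \<in> K"
    by (rule split_graphE[OF G]) blast
  obtain k0 where k0: "k0 \<in> C" "k0 \<in> K"
  proof (cases "v \<in> K")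
    case True
    show thesis by (rule that[of v]) (simp_all add: C_def True)
  next
    case False
    then have "v \<in> I" using simple_graph_adj_in_V[OF Gs assms(3)] KI by blast
    then have "y \<in> K" using I assms(3) by blast
    moreover have "y \<in> C" using assms(3) by (simp add: C_def)
    ultimately show thesis using that by blast
  qed
  have K_C: "c \<in> C" if c: "c \<in> K" for c
  proof (cases "c = k0")
    case False
    then show ?thesis using closed[OF k0(1) K[OF k0(2) c]] by simp
  qed (use k0 in simp)
  have edge: "a \<in> C" if ab: "adj E a b" for a b
  proof (cases "a \<in> K")
    case False
    then have "a \<in> I" using simple_graph_adj_in_V[OF Gs ab] KI by blast
    then have "b \<in> C" using I ab K_C by blast
    moreover have "adj E b a" using ab adj_commute by metis
    ultimately show ?thesis using closed by blast
  qed (use K_C in blast)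
  have adj_trans: "adj E a c" if ab: "adj E a b" and bc: "adj E b c" and "a \<noteq> c" for a b c
  proof -
    have "adj E c b" using bc adj_commute by metis
    then have "c \<in> C" using edge by blast
    moreover have "a \<in> C" using edge ab by blast
    ultimately show ?thesis using clique \<open>a \<noteq> c\<close> by blast
  qed
  have "finite V" using Gs by (simp add: simple_graph_def)
  then have "vertex_shelling V E = Pow V"
    by (rule vertex_shelling_eq_Pow_if_adj_trans) (rule adj_trans)
  with nontrivial show False ..
qed

lemma split_graph_shelling_nonisolated_iff:
  assumes "split_graph V E" "vertex_shelling V E \<noteq> Pow V" "v \<in> V"
  shows "shelling_nonisolated (vertex_shelling V E) V v \<longleftrightarrow> (\<exists>y. adj E v y)"
proof
  assume "shelling_nonisolated (vertex_shelling V E) V v"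
  then show "\<exists>y. adj E v y"
    using split_graph_isolated_not_shelling_nonisolated[OF assms(1,3)] by blast
qed (use split_graph_shelling_nonisolatedI[OF assms(1,2)] in blast)

lemma split_graph_adj_iff_vertex_shelling:
  assumes G: "split_graph V E" and nontrivial: "vertex_shelling V E \<noteq> Pow V"
    and "u \<in> V" "v \<in> V" "u \<noteq> v"
  shows "adj E u v \<longleftrightarrow> shelling_nonisolated (vertex_shelling V E) V u
    \<and> shelling_nonisolated (vertex_shelling V E) V v \<and> V - {u, v} \<in> vertex_shelling V E"
proof -
  note Gs = split_graph_simple[OF G]
  have "adj E u v \<longleftrightarrow> (\<exists>y. adj E u y) \<and> (\<exists>y. adj E v y) \<and> V - {u, v} \<in> vertex_shelling V E"
  proof
    assume uv: "adj E u v"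
    moreover have "adj E v u" using uv adj_commute by metis
    moreover from this uv have "is_clique E {t \<in> {u, v}. \<exists>y. adj E t y}"
      unfolding is_clique_def by blast
    with split_graph_complement_in_vertex_shelling[OF G] assms(3,4)
    have "V - {u, v} \<in> vertex_shelling V E" by simp
    ultimately show "(\<exists>y. adj E u y) \<and> (\<exists>y. adj E v y) \<and> V - {u, v} \<in> vertex_shelling V E"
      by blast
  next
    assume h: "(\<exists>y. adj E u y) \<and> (\<exists>y. adj E v y) \<and> V - {u, v} \<in> vertex_shelling V E"
    show "adj E u v"
    proof (rule ccontr)
      assume nuv: "\<not> adj E u v"
      obtain u' v' where "adj E u u'" "adj E v v'" using h by blast
      from split_graph_short_induced_path[OF G \<open>u \<noteq> v\<close> nuv this] show False
      proof
        assume "\<exists>k. adj E u k \<and> adj E k v"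
        then obtain k where "adj E u k" "adj E k v" by blast
        from complement_notin_vertex_shelling_P3[OF Gs \<open>u \<noteq> v\<close> this nuv] h show False by blast
      next
        assume "\<exists>k1 k2. adj E u k1 \<and> adj E k1 k2 \<and> adj E k2 v \<and> \<not> adj E u k2 \<and> \<not> adj E k1 v"
        then obtain k1 k2 where
          "adj E u k1" "adj E k1 k2" "adj E k2 v" "\<not> adj E u k2" "\<not> adj E k1 v" by blast
        from complement_notin_vertex_shelling_P4[OF Gs \<open>u \<noteq> v\<close> this nuv] h show False by blast
      qed
    qed
  qed
  with split_graph_shelling_nonisolated_iff[OF G nontrivial] assms(3,4) show ?thesis by simp
qed

lemma split_graph_eq_if_vertex_shelling_eq:
  assumes "split_graph V E1" "split_graph V E2"
    and "vertex_shelling V E1 = vertex_shelling V E2" "vertex_shelling V E1 \<noteq> Pow V"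
  shows "E1 = E2"
proof -
  have adj: "adj E1 u v \<longleftrightarrow> adj E2 u v" if "u \<in> V" "v \<in> V" "u \<noteq> v" for u v
    using split_graph_adj_iff_vertex_shelling[OF assms(1,4) that]
      split_graph_adj_iff_vertex_shelling[OF assms(2) _ that] assms(3,4) by simp
  show ?thesis
  proof
    show "E1 \<subseteq> E2" by (rule simple_graph_subsetI[OF split_graph_simple[OF assms(1)]]) (simp add: adj)
    show "E2 \<subseteq> E1" by (rule simple_graph_subsetI[OF split_graph_simple[OF assms(2)]]) (simp add: adj)
  qed
qed

theorem mainTheorem5:
  fixes V :: "'a set" and \<F> :: "'a set set"
  assumes "\<exists>E. split_graph V E \<and> vertex_shelling V E = \<F>"
    and "\<F> \<noteq> Pow V"
  shows "\<exists>!E. split_graph V E \<and> vertex_shelling V E = \<F>"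
proof -
  obtain E0 where E0: "split_graph V E0" "vertex_shelling V E0 = \<F>" using assms(1) by blast
  show ?thesis
  proof (rule ex1I[of _ E0])
    fix E assume E: "split_graph V E \<and> vertex_shelling V E = \<F>"
    show "E = E0" by (rule split_graph_eq_if_vertex_shelling_eq) (use E E0 assms(2) in auto)
  qed (use E0 in blast)
qed

end
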